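(* For every nonreal $z\in\mathbb C$ and every vertex $x_0$ with $\ell(x_0)\ge1$ there exists a function $v:\Gamma_{x_0}\to\mathbb C$, not identically zero, such that $(Jv)(x)=zv(x)$ for all $x\in\Gamma_{x_0}\setminus\{x_0\}$. Any such $v$ satisfies $v(x)\ne0$ for all $x\in\Gamma_{x_0}$, and it is unique up to a constant multiple.
   Context: Let $\Gamma$ be an infinite connected tree whose vertices are arranged in levels $\ell(x)\in\{0,1,2,\dots\}$: every vertex $x$ is adjacent to exactly one vertex $x'$ with $\ell(x')=\ell(x)+1$; for $\ell(x)\ge 1$ the set $N_x=\{y:\ y'=x\}$ of neighbours of $x$ on level $\ell(x)-1$ is finite and nonempty; $N_x=\emptyset$ if $\ell(x)=0$; there are no other edges. For $x\in\Gamma$, $\Gamma_x$ is the finite subtree consisting of $x$ and all its descendants. Fix $\lambda_x>0$, $\beta_x\in\mathbb R$. The Jacobi matrix $J$ acts on functions $v$ by $(Jv)(x)=\lambda_x v(x')+\beta_x v(x)+\sum_{y\in N_x}\lambda_y v(y)$. *)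

theory Defs
  imports Complex_Main
begin

text \<open>A levelled tree: vertices of type 'v, level function lev, and the unique
upper neighbour par x (written x' in the paper).  The edges are exactly
{x, par x}.\<close>

definition children :: "('v \<Rightarrow> 'v) \<Rightarrow> 'v \<Rightarrow> 'v set" where
  "children par x = {y. par y = x}"

definition level_tree :: "('v \<Rightarrow> nat) \<Rightarrow> ('v \<Rightarrow> 'v) \<Rightarrow> bool" where
  "level_tree lev par \<longleftrightarrow>
     (\<forall>x. lev (par x) = lev x + 1) \<and>
     (\<forall>x. lev x \<ge> 1 \<longrightarrow> finite (children par x) \<and> children par x \<noteq> {}) \<and>
     (\<forall>x. lev x = 0 \<longrightarrow> children par x = {}) \<and>
     (\<forall>x y. \<exists>m n. (par ^^ m) x = (par ^^ n) y)"

definition subtree :: "('v \<Rightarrow> 'v) \<Rightarrow> 'v \<Rightarrow> 'v set" where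
  "subtree par x = {y. \<exists>n. (par ^^ n) y = x}"

definition jacobi :: "('v \<Rightarrow> 'v) \<Rightarrow> ('v \<Rightarrow> real) \<Rightarrow> ('v \<Rightarrow> real)
    \<Rightarrow> ('v \<Rightarrow> complex) \<Rightarrow> 'v \<Rightarrow> complex" where
  "jacobi par lam beta v x =
     complex_of_real (lam x) * v (par x) + complex_of_real (beta x) * v x
     + (\<Sum>y\<in>children par x. complex_of_real (lam y) * v y)"

text \<open>v is a solution of (Jv)(x) = z v(x) on Gamma_{x0} minus {x0}, not identically
zero on Gamma_{x0} (values of v outside Gamma_{x0} are irrelevant).\<close>
definition sub_solution :: "('v \<Rightarrow> 'v) \<Rightarrow> ('v \<Rightarrow> real) \<Rightarrow> ('v \<Rightarrow> real)
    \<Rightarrow> complex \<Rightarrow> 'v \<Rightarrow> ('v \<Rightarrow> complex) \<Rightarrow> bool" where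
  "sub_solution par lam beta z x0 v \<longleftrightarrow>
     (\<exists>x\<in>subtree par x0. v x \<noteq> 0) \<and>
     (\<forall>x\<in>subtree par x0 - {x0}. jacobi par lam beta v x = z * v x)"

end

theory Submission imports Defs begin

text \<open>Summing \<open>conj (v y) \<cdot> ((Jv)(y) - z v(y))\<close> over the finite subtree \<open>\<Gamma>\<^sub>x\<close>, every
edge below \<open>x\<close> contributes a term together with its complex conjugate, so only the root
survives (Green's identity): \<open>Im (conj (v x) \<cdot> ((J\<^sub>x v)(x) - z v(x))) = - Im z \<cdot> \<Sum> |v|\<^sup>2\<close>, where
\<open>J\<^sub>x\<close> omits the edge to the parent. Hence a solution vanishing at the root vanishes on
\<open>\<Gamma>\<^sub>x\<close>, which gives uniqueness; a zero anywhere climbs to the root because \<open>\<lambda> > 0\<close>;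
and a nonzero solution on a child's subtree never satisfies the equation at the child with
parent value 0, so the child solutions can be rescaled to glue into a solution on \<open>\<Gamma>\<^sub>x\<close>.\<close>

lemma level_tree_level_par: "level_tree lev par \<Longrightarrow> lev (par x) = lev x + 1"
  unfolding level_tree_def by blast

lemma level_tree_finite_children: "level_tree lev par \<Longrightarrow> finite (children par x)"
  unfolding level_tree_def by (cases "lev x = 0") auto

lemma level_funpow_par:
  "level_tree lev par \<Longrightarrow> lev ((par ^^ n) y) = lev y + n"
  by (induction n) (auto simp: level_tree_level_par)

lemma subtree_self [simp]: "x \<in> subtree par x"
  unfolding subtree_def by (auto intro: exI[of _ 0])

lemma subtree_par:
  assumes "y \<in> subtree par x" "y \<noteq> x" shows "par y \<in> subtree par x"
proof -
  obtain n where n: "(par ^^ n) y = x" using assms(1) unfolding subtree_def by auto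
  with assms(2) obtain m where "n = Suc m" by (cases n) auto
  with n have "(par ^^ m) (par y) = x" by (simp add: funpow_Suc_right del: funpow.simps)
  then show ?thesis unfolding subtree_def by auto
qed

lemma subtree_child:
  assumes "par y \<in> subtree par x" shows "y \<in> subtree par x"
proof -
  obtain n where "(par ^^ n) (par y) = x" using assms unfolding subtree_def by auto
  then have "(par ^^ Suc n) y = x" by (simp add: funpow_Suc_right del: funpow.simps)
  then show ?thesis unfolding subtree_def by blast
qed

lemma children_subset_subtree: "y \<in> subtree par x \<Longrightarrow> children par y \<subseteq> subtree par x"
  unfolding children_def using subtree_child[where par=par and x=x] by auto

lemma subtree_trans:
  assumes "y \<in> subtree par c" "c \<in> subtree par x" shows "y \<in> subtree par x"
proof -
  obtain m n where "(par ^^ m) y = c" "(par ^^ n) c = x" using assms unfolding subtree_def by auto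
  then have "(par ^^ (n + m)) y = x" by (simp add: funpow_add)
  then show ?thesis unfolding subtree_def by blast
qed

lemma subtree_eq_insert_UN_children:
  "subtree par x = insert x (\<Union>c\<in>children par x. subtree par c)"
proof (intro equalityI subsetI)
  fix y assume "y \<in> subtree par x"
  then obtain n where n: "(par ^^ n) y = x" unfolding subtree_def by auto
  show "y \<in> insert x (\<Union>c\<in>children par x. subtree par c)"
  proof (cases n)
    case 0
    then show ?thesis using n by simp
  next
    case (Suc m)
    then have "(par ^^ m) y \<in> children par x" using n by (simp add: children_def)
    moreover have "y \<in> subtree par ((par ^^ m) y)" unfolding subtree_def by blast
    ultimately show ?thesis by blast
  qed
next
  fix y assume "y \<in> insert x (\<Union>c\<in>children par x. subtree par c)"
  then consider "y = x" | c where "par c = x" "y \<in> subtree par c"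
    by (auto simp: children_def)
  then show "y \<in> subtree par x"
  proof cases
    case (2 c)
    then show ?thesis using subtree_trans[OF 2(2) subtree_child[OF subtree_self]] by simp
  qed simp
qed

lemma subtree_funpow_level_diff:
  assumes "level_tree lev par" "y \<in> subtree par x"
  shows "lev y \<le> lev x" "(par ^^ (lev x - lev y)) y = x"
proof -
  obtain n where n: "(par ^^ n) y = x" using assms(2) unfolding subtree_def by auto
  moreover have "lev x = lev y + n" using level_funpow_par[OF assms(1), of n y] n by simp
  ultimately show "lev y \<le> lev x" "(par ^^ (lev x - lev y)) y = x" by auto
qed

lemma subtree_level_less:
  "level_tree lev par \<Longrightarrow> y \<in> subtree par x \<Longrightarrow> y \<noteq> x \<Longrightarrow> lev y < lev x"
  using subtree_funpow_level_diff[of lev par y x] by (cases "lev x = lev y") auto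

lemma par_notin_subtree: "level_tree lev par \<Longrightarrow> par x \<notin> subtree par x"
  using subtree_funpow_level_diff(1)[of lev par "par x" x] level_tree_level_par[of lev par x] by auto

lemma finite_subtree:
  assumes "level_tree lev par" shows "finite (subtree par x)"
proof (induction "lev x" arbitrary: x rule: less_induct)
  case less
  have "lev c < lev x" if "c \<in> children par x" for c
    using that level_tree_level_par[OF assms, of c] by (simp add: children_def)
  then show ?case
    using less level_tree_finite_children[OF assms]
    by (subst subtree_eq_insert_UN_children) blast
qed

lemma sum_children_over_subtree:
  assumes "level_tree lev par"
  shows "(\<Sum>y\<in>subtree par x. \<Sum>w\<in>children par y. f y w) = (\<Sum>w\<in>subtree par x - {x}. f (par w) w)"
proof -
  let ?G = "subtree par x"
  have "(\<Sum>w\<in>?G - {x}. f (par w) w) = (\<Sum>y\<in>?G. \<Sum>w\<in>{w. w \<in> ?G - {x} \<and> par w = y}. f (par w) w)"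
    using finite_subtree[OF assms] subtree_par[of _ par x] by (intro sum.group[symmetric]) blast+
  also have "\<dots> = (\<Sum>y\<in>?G. \<Sum>w\<in>children par y. f y w)"
  proof (rule sum.cong[OF refl])
    fix y assume "y \<in> ?G"
    then have "{w. w \<in> ?G - {x} \<and> par w = y} = children par y"
      using children_subset_subtree[of y par x] par_notin_subtree[OF assms, of x]
      by (auto simp: children_def)
    then show "(\<Sum>w\<in>{w. w \<in> ?G - {x} \<and> par w = y}. f (par w) w) = (\<Sum>w\<in>children par y. f y w)"
      by (auto simp: children_def intro: sum.cong)
  qed
  finally show ?thesis ..
qed

definition eigen_off_root :: "('v \<Rightarrow> 'v) \<Rightarrow> ('v \<Rightarrow> real) \<Rightarrow> ('v \<Rightarrow> real)
    \<Rightarrow> complex \<Rightarrow> 'v \<Rightarrow> ('v \<Rightarrow> complex) \<Rightarrow> bool" where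
  "eigen_off_root par lam beta z x v \<longleftrightarrow>
     (\<forall>y\<in>subtree par x - {x}. jacobi par lam beta v y = z * v y)"

lemma sub_solution_iff:
  "sub_solution par lam beta z x v \<longleftrightarrow>
     (\<exists>y\<in>subtree par x. v y \<noteq> 0) \<and> eigen_off_root par lam beta z x v"
  unfolding sub_solution_def eigen_off_root_def ..

lemma jacobi_local_scale:
  assumes "\<And>w. w = par y \<or> w = y \<or> w \<in> children par y \<Longrightarrow> v w = a * u w"
  shows "jacobi par lam beta v y = a * jacobi par lam beta u y"
proof -
  have "(\<Sum>w\<in>children par y. complex_of_real (lam w) * v w)
      = a * (\<Sum>w\<in>children par y. complex_of_real (lam w) * u w)"
    unfolding sum_distrib_left by (rule sum.cong) (auto simp: assms)
  then show ?thesis unfolding jacobi_def using assms by (simp add: algebra_simps)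
qed

lemma jacobi_diff:
  "jacobi par lam beta (\<lambda>y. w y - c * v y) x = jacobi par lam beta w x - c * jacobi par lam beta v x"
  by (simp add: jacobi_def sum_subtractf sum_distrib_left algebra_simps)

lemma eigen_off_root_diff:
  assumes "eigen_off_root par lam beta z x v" "eigen_off_root par lam beta z x w"
  shows "eigen_off_root par lam beta z x (\<lambda>y. w y - c * v y)"
  using assms unfolding eigen_off_root_def by (simp add: jacobi_diff algebra_simps)

lemma eigen_off_root_subtree:
  assumes "level_tree lev par" "eigen_off_root par lam beta z x v" "y \<in> subtree par x"
  shows "eigen_off_root par lam beta z y v"
proof -
  have "w \<in> subtree par x - {x}" if "w \<in> subtree par y - {y}" for w
  proof -
    have "lev w < lev y" using subtree_level_less[OF assms(1)] that by blast
    moreover have "lev y \<le> lev x" using subtree_funpow_level_diff(1)[OF assms(1,3)] .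
    ultimately show ?thesis using subtree_trans[OF _ assms(3), of w] that by auto
  qed
  then show ?thesis using assms(2) unfolding eigen_off_root_def by blast
qed

lemma green_identity:
  assumes "level_tree lev par" "eigen_off_root par lam beta z x v"
  shows "Im (cnj (v x) * (of_real (beta x) * v x + (\<Sum>w\<in>children par x. of_real (lam w) * v w) - z * v x))
       = - Im z * (\<Sum>y\<in>subtree par x. (cmod (v y))\<^sup>2)"
proof -
  let ?G = "subtree par x"
  define P where "P = (\<Sum>y\<in>?G - {x}. of_real (lam y) * cnj (v y) * v (par y))"
  define R where "R = (\<Sum>y\<in>?G. of_real (beta y) * cnj (v y) * v y)"
  define N where "N = (\<Sum>y\<in>?G. (cmod (v y))\<^sup>2)"
  have fin: "finite ?G" using finite_subtree[OF assms(1)] .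
  have norm_sq: "cnj (v y) * v y = of_real ((cmod (v y))\<^sup>2)" for y
    using complex_norm_square[of "v y"] by (simp add: mult.commute)
  have parent_edges: "(\<Sum>y\<in>?G. of_real (lam y) * cnj (v y) * v (par y))
      = of_real (lam x) * cnj (v x) * v (par x) + P"
    unfolding P_def by (rule sum.remove[OF fin subtree_self])
  \<comment> \<open>an edge below the root is seen once from the child and once, conjugated, from the parent\<close>
  have child_edges: "(\<Sum>y\<in>?G. \<Sum>w\<in>children par y. of_real (lam w) * cnj (v y) * v w) = cnj P"
    unfolding sum_children_over_subtree[OF assms(1)] P_def by (simp add: cnj_sum mult_ac)
  have "(\<Sum>y\<in>?G. cnj (v y) * jacobi par lam beta v y)
      = (\<Sum>y\<in>?G. of_real (lam y) * cnj (v y) * v (par y)) + R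
        + (\<Sum>y\<in>?G. \<Sum>w\<in>children par y. of_real (lam w) * cnj (v y) * v w)"
    unfolding R_def jacobi_def by (simp add: ring_distribs sum.distrib sum_distrib_left mult_ac)
  also have "\<dots> = of_real (lam x) * cnj (v x) * v (par x) + P + R + cnj P"
    unfolding parent_edges child_edges ..
  finally have expand: "(\<Sum>y\<in>?G. cnj (v y) * jacobi par lam beta v y)
      = of_real (lam x) * cnj (v x) * v (par x) + P + R + cnj P" .
  have off_root: "(\<Sum>y\<in>?G - {x}. cnj (v y) * (jacobi par lam beta v y - z * v y)) = 0"
    using assms(2) unfolding eigen_off_root_def by (intro sum.neutral) simp
  have "(\<Sum>y\<in>?G. cnj (v y) * jacobi par lam beta v y) - z * of_real N
      = (\<Sum>y\<in>?G. cnj (v y) * (jacobi par lam beta v y - z * v y))"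
    unfolding N_def of_real_sum norm_sq[symmetric]
    by (simp add: sum_subtractf sum_distrib_left right_diff_distrib mult_ac)
  also have "\<dots> = cnj (v x) * (jacobi par lam beta v x - z * v x)"
    using off_root by (simp add: sum.remove[OF fin subtree_self])
  finally have "cnj (v x) * (jacobi par lam beta v x - z * v x)
      = of_real (lam x) * cnj (v x) * v (par x) + P + R + cnj P - z * of_real N"
    unfolding expand ..
  then have "cnj (v x) * (of_real (beta x) * v x + (\<Sum>w\<in>children par x. of_real (lam w) * v w) - z * v x)
      = P + cnj P + R - z * of_real N"
    unfolding jacobi_def by (simp add: algebra_simps)
  moreover have "Im R = 0"
    unfolding R_def by (simp add: norm_sq mult.assoc flip: of_real_mult)
  ultimately show ?thesis unfolding N_def by simp
qed

lemma eigen_off_root_vanishes_if_root_zero: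
  assumes "level_tree lev par" "Im z \<noteq> 0" "eigen_off_root par lam beta z x v" "v x = 0"
  shows "\<forall>y\<in>subtree par x. v y = 0"
proof -
  have "Im z * (\<Sum>y\<in>subtree par x. (cmod (v y))\<^sup>2) = 0"
    using green_identity[OF assms(1,3)] assms(4) by simp
  then have "(\<Sum>y\<in>subtree par x. (cmod (v y))\<^sup>2) = 0" using assms(2) by simp
  then show ?thesis using finite_subtree[OF assms(1)] by (simp add: sum_nonneg_eq_0_iff)
qed

lemma eigen_off_root_root_equation_fails:
  assumes "level_tree lev par" "Im z \<noteq> 0" "eigen_off_root par lam beta z x v" "v x \<noteq> 0"
  shows "of_real (beta x) * v x + (\<Sum>w\<in>children par x. of_real (lam w) * v w) \<noteq> z * v x"
proof
  assume "of_real (beta x) * v x + (\<Sum>w\<in>children par x. of_real (lam w) * v w) = z * v x"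
  then have "Im z * (\<Sum>y\<in>subtree par x. (cmod (v y))\<^sup>2) = 0"
    using green_identity[OF assms(1,3)] by simp
  moreover have "(cmod (v x))\<^sup>2 \<le> (\<Sum>y\<in>subtree par x. (cmod (v y))\<^sup>2)"
    using finite_subtree[OF assms(1)] by (intro member_le_sum) auto
  ultimately show False using assms(2,4) by simp
qed

lemma eigen_off_root_zero_propagates_to_root:
  assumes "level_tree lev par" "Im z \<noteq> 0" "\<And>x. lam x > 0"
    and "eigen_off_root par lam beta z x0 v" "y \<in> subtree par x0" "v y = 0"
  shows "v x0 = 0"
proof -
  obtain n where "(par ^^ n) y = x0" using assms(5) unfolding subtree_def by auto
  then show ?thesis using assms(5,6)
  proof (induction n arbitrary: y)
    case (Suc n)
    show ?case
    proof (cases "y = x0")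
      case False
      have "\<forall>w\<in>subtree par y. v w = 0"
        using eigen_off_root_vanishes_if_root_zero[OF assms(1,2)]
          eigen_off_root_subtree[OF assms(1,4) Suc.prems(2)] Suc.prems(3) by blast
      then have "\<forall>w\<in>children par y. v w = 0" using children_subset_subtree[of y par y] by auto
      moreover have "jacobi par lam beta v y = z * v y"
        using assms(4) Suc.prems(2) False unfolding eigen_off_root_def by blast
      ultimately have "of_real (lam y) * v (par y) = 0" using Suc.prems(3) by (simp add: jacobi_def)
      then have "v (par y) = 0" using assms(3)[of y] by simp
      moreover have "(par ^^ n) (par y) = x0"
        using Suc.prems(1) by (simp add: funpow_Suc_right del: funpow.simps)
      ultimately show ?thesis using Suc.IH subtree_par[OF Suc.prems(2) False] by blast
    qed (use Suc.prems in simp)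
  qed simp
qed

lemma eigen_off_root_nonvanishing:
  assumes "level_tree lev par" "Im z \<noteq> 0" "\<And>x. lam x > 0"
    and "eigen_off_root par lam beta z x v" "\<exists>y\<in>subtree par x. v y \<noteq> 0"
  shows "\<forall>y\<in>subtree par x. v y \<noteq> 0"
  using eigen_off_root_zero_propagates_to_root[OF assms(1-4)]
    eigen_off_root_vanishes_if_root_zero[OF assms(1,2,4)] assms(5) by blast

lemma eigen_off_root_unique:
  assumes "level_tree lev par" "Im z \<noteq> 0"
    and "eigen_off_root par lam beta z x v" "eigen_off_root par lam beta z x w" "v x \<noteq> 0"
  shows "\<exists>c. \<forall>y\<in>subtree par x. w y = c * v y"
proof -
  define c where "c = w x / v x"
  have "w x - c * v x = 0" using assms(5) by (simp add: c_def)
  with eigen_off_root_diff[OF assms(3,4)]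
  have "\<forall>y\<in>subtree par x. w y - c * v y = 0"
    by (rule eigen_off_root_vanishes_if_root_zero[OF assms(1,2)])
  then show ?thesis by auto
qed

lemma eigen_off_root_glue_children:
  assumes "level_tree lev par" "Im z \<noteq> 0"
    and V: "\<And>c. c \<in> children par x \<Longrightarrow> V c c = 1 \<and> eigen_off_root par lam beta z c (V c)"
  shows "\<exists>v. v x = 1 \<and> eigen_off_root par lam beta z x v"
proof -
  define D where "D c = of_real (beta c) + (\<Sum>w\<in>children par c. of_real (lam w) * V c w) - z" for c
  have D: "D c \<noteq> 0" if "c \<in> children par x" for c
    using eigen_off_root_root_equation_fails[OF assms(1,2), of lam beta c "V c"] V[OF that]
    by (simp add: D_def)
  \<comment> \<open>\<open>a c\<close> makes the equation at \<open>c\<close> hold once the parent value is \<open>v x = 1\<close>\<close>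
  define a where "a c = - of_real (lam c) / D c" for c
  define branch where "branch y = (par ^^ (lev x - 1 - lev y)) y" for y
  define v where "v y = (if y = x then 1 else a (branch y) * V (branch y) y)" for y
  have v_branch: "v y = a c * V c y" if c: "c \<in> children par x" and y: "y \<in> subtree par c" for c y
  proof -
    have lev_c: "lev x = lev c + 1"
      using c level_tree_level_par[OF assms(1), of c] by (simp add: children_def)
    then have "branch y = c"
      using subtree_funpow_level_diff(2)[OF assms(1) y] unfolding branch_def by simp
    moreover have "y \<noteq> x" using subtree_funpow_level_diff(1)[OF assms(1) y] lev_c by auto
    ultimately show ?thesis by (simp add: v_def)
  qed
  have "jacobi par lam beta v y = z * v y" if y_x: "y \<in> subtree par x - {x}" for y
  proof -
    have "y \<in> (\<Union>c\<in>children par x. subtree par c)"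
      using y_x subtree_eq_insert_UN_children[of par x] by blast
    then obtain c where c: "c \<in> children par x" and y: "y \<in> subtree par c" by blast
    have v_c: "v w = a c * V c w" if "w \<in> subtree par c" for w
      using v_branch[OF c that] .
    show ?thesis
    proof (cases "y = c")
      case True
      have "(\<Sum>w\<in>children par c. of_real (lam w) * v w)
          = a c * (\<Sum>w\<in>children par c. of_real (lam w) * V c w)"
        unfolding sum_distrib_left
        using children_subset_subtree[OF subtree_self[of c par]] v_c by (intro sum.cong) auto
      moreover have "v (par c) = 1" using c by (simp add: children_def v_def)
      moreover have "v c = a c" using v_c[OF subtree_self] V[OF c] by simp
      ultimately have "jacobi par lam beta v c = of_real (lam c) + a c * (D c + z)"
        unfolding jacobi_def D_def by (simp add: algebra_simps)
      also have "\<dots> = z * v c" using D[OF c] \<open>v c = a c\<close> by (simp add: a_def field_simps)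
      finally show ?thesis using True by simp
    next
      case False
      have "w \<in> subtree par c" if "w = par y \<or> w = y \<or> w \<in> children par y" for w
        using that y subtree_par[OF y False] children_subset_subtree[OF y] by blast
      then have "jacobi par lam beta v y = a c * jacobi par lam beta (V c) y"
        using v_c by (intro jacobi_local_scale) blast
      also have "\<dots> = z * v y"
        using V[OF c] False y v_c[OF y] unfolding eigen_off_root_def by simp
      finally show ?thesis .
    qed
  qed
  moreover have "v x = 1" by (simp add: v_def)
  ultimately show ?thesis unfolding eigen_off_root_def by blast
qed

lemma eigen_off_root_exists:
  assumes "level_tree lev par" "Im z \<noteq> 0"
  shows "\<exists>v. v x = 1 \<and> eigen_off_root par lam beta z x v"
proof (induction "lev x" arbitrary: x rule: less_induct)
  case less
  have "\<exists>V. V c = 1 \<and> eigen_off_root par lam beta z c V" if "c \<in> children par x" for c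
    by (rule less) (use that level_tree_level_par[OF assms(1), of c] in \<open>simp add: children_def\<close>)
  then have "\<forall>c\<in>children par x. \<exists>V. V c = 1 \<and> eigen_off_root par lam beta z c V" ..
  then obtain V where "\<forall>c\<in>children par x. V c c = 1 \<and> eigen_off_root par lam beta z c (V c)"
    by (auto dest: bchoice)
  then show ?case using eigen_off_root_glue_children[OF assms] by blast
qed

theorem lemma3:
  fixes lev :: "'v \<Rightarrow> nat" and par :: "'v \<Rightarrow> 'v"
    and lam beta :: "'v \<Rightarrow> real" and z :: complex and x0 :: 'v
  assumes "level_tree lev par"
    and "\<And>x. lam x > 0"
    and "Im z \<noteq> 0"
    and "lev x0 \<ge> 1"
  shows "(\<exists>v. sub_solution par lam beta z x0 v)
       \<and> (\<forall>v. sub_solution par lam beta z x0 v \<longrightarrow> (\<forall>x\<in>subtree par x0. v x \<noteq> 0))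
       \<and> (\<forall>v w. sub_solution par lam beta z x0 v \<and> sub_solution par lam beta z x0 w
              \<longrightarrow> (\<exists>c. \<forall>x\<in>subtree par x0. w x = c * v x))"
proof (intro conjI allI impI)
  obtain v where "v x0 = 1" "eigen_off_root par lam beta z x0 v"
    using eigen_off_root_exists[OF assms(1,3)] by blast
  then have "sub_solution par lam beta z x0 v"
    unfolding sub_solution_iff by (auto intro!: bexI[of _ x0])
  then show "\<exists>v. sub_solution par lam beta z x0 v" by blast
next
  fix v assume "sub_solution par lam beta z x0 v"
  then have "eigen_off_root par lam beta z x0 v" "\<exists>y\<in>subtree par x0. v y \<noteq> 0"
    unfolding sub_solution_iff by simp_all
  then show "\<forall>x\<in>subtree par x0. v x \<noteq> 0"
    by (rule eigen_off_root_nonvanishing[where lam=lam, OF assms(1,3,2)])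
next
  fix v w assume "sub_solution par lam beta z x0 v \<and> sub_solution par lam beta z x0 w"
  then have v: "eigen_off_root par lam beta z x0 v" "\<exists>y\<in>subtree par x0. v y \<noteq> 0"
    and w: "eigen_off_root par lam beta z x0 w"
    unfolding sub_solution_iff by simp_all
  have "v x0 \<noteq> 0"
    using eigen_off_root_nonvanishing[where lam=lam, OF assms(1,3,2) v] by simp
  then show "\<exists>c. \<forall>x\<in>subtree par x0. w x = c * v x"
    by (rule eigen_off_root_unique[OF assms(1,3) v(1) w])
qed

end
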